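(* Let $K\ge1$, $T\ge1$ and $\ell_1,\dots,\ell_T\in[0,1]^K$, and suppose $H^{\mathrm{ah}}_T\ge L^*_T$. Then the cumulative loss variance for AdaHedge satisfies \[ V^{\mathrm{ah}}_T\le\frac{L^*_T(T-L^*_T)}{T}+2\Delta^{\mathrm{ah}}_T. \]
   Context: Hedge setting: $K$ experts; in round $t$ the learner chooses a probability vector $w_t$, then $\ell_t$ is revealed and the learner suffers $h_t=\sum_kw_{t,k}\ell_{t,k}$. Write $L_{t,k}=\sum_{s=1}^t\ell_{s,k}$ ($L_{0,k}=0$), $L^*_t=\min_kL_{t,k}$, $H_T=\sum_{t\le T}h_t$. Exponential weights with learning rate $\eta\in(0,\infty]$ at time $t$: $w_{t,k}=e^{-\eta L_{t-1,k}}/\sum_je^{-\eta L_{t-1,j}}$ if $\eta<\infty$; for $\eta=\infty$, $w_t$ uniform on $\{k:L_{t-1,k}=L^*_{t-1}\}$. With learning rate $\eta_t$ in round $t$: mix loss $m_t=-\frac1{\eta_t}\ln\sum_kw_{t,k}e^{-\eta_t\ell_{t,k}}$ if $\eta_t<\infty$, $m_t=L^*_t-L^*_{t-1}$ if $\eta_t=\infty$; mixability gap $\delta_t=h_t-m_t$; loss variance $v_t=\sum_kw_{t,k}(\ell_{t,k}-h_t)^2$. AdaHedge: $\Delta^{\mathrm{ah}}_0=0$; in round $t$, $\eta^{\mathrm{ah}}_t=\ln K/\Delta^{\mathrm{ah}}_{t-1}$ ($=\infty$ if $\Delta^{\mathrm{ah}}_{t-1}=0$), weights are exponential weights with learning rate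 $\eta^{\mathrm{ah}}_t$ from $L_{t-1}$, and $\Delta^{\mathrm{ah}}_t=\Delta^{\mathrm{ah}}_{t-1}+\delta^{\mathrm{ah}}_t$. $H^{\mathrm{ah}}_T$ is AdaHedge's cumulative loss and $V^{\mathrm{ah}}_T=\sum_{t\le T}v^{\mathrm{ah}}_t$. *)

theory Defs
  imports "HOL-Analysis.Analysis" "HOL-Library.Extended_Real"
begin

text \<open>Hedge setting. Experts are indexed by k < K (K :: nat). A loss sequence is
 l :: nat => nat => real, with l t k the loss of expert k in round t (rounds t = 1, 2, ...).\<close>

definition cumL :: "(nat \<Rightarrow> nat \<Rightarrow> real) \<Rightarrow> nat \<Rightarrow> nat \<Rightarrow> real" where
  "cumL l t k = (\<Sum>s\<in>{1..t}. l s k)"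

definition Lstar :: "nat \<Rightarrow> (nat \<Rightarrow> nat \<Rightarrow> real) \<Rightarrow> nat \<Rightarrow> real" where
  "Lstar K l t = Min ((\<lambda>k. cumL l t k) ` {..<K})"

definition ew_weight :: "nat \<Rightarrow> (nat \<Rightarrow> nat \<Rightarrow> real) \<Rightarrow> ereal \<Rightarrow> nat \<Rightarrow> nat \<Rightarrow> real" where
  "ew_weight K l eta t k =
     (if eta = \<infinity> then
        (if k < K \<and> cumL l (t - 1) k = Lstar K l (t - 1)
         then 1 / real (card {j\<in>{..<K}. cumL l (t - 1) j = Lstar K l (t - 1)}) else 0)
      else
        (if k < K then exp (- real_of_ereal eta * cumL l (t - 1) k) /
            (\<Sum>j<K. exp (- real_of_ereal eta * cumL l (t - 1) j)) else 0))"

definition hedge_loss :: "nat \<Rightarrow> (nat \<Rightarrow> nat \<Rightarrow> real) \<Rightarrow> ereal \<Rightarrow> nat \<Rightarrow> real" where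
  "hedge_loss K l eta t = (\<Sum>k<K. ew_weight K l eta t k * l t k)"

definition mix_loss :: "nat \<Rightarrow> (nat \<Rightarrow> nat \<Rightarrow> real) \<Rightarrow> ereal \<Rightarrow> nat \<Rightarrow> real" where
  "mix_loss K l eta t =
     (if eta = \<infinity> then Lstar K l t - Lstar K l (t - 1)
      else - (1 / real_of_ereal eta) *
             ln (\<Sum>k<K. ew_weight K l eta t k * exp (- real_of_ereal eta * l t k)))"

definition mix_gap :: "nat \<Rightarrow> (nat \<Rightarrow> nat \<Rightarrow> real) \<Rightarrow> ereal \<Rightarrow> nat \<Rightarrow> real" where
  "mix_gap K l eta t = hedge_loss K l eta t - mix_loss K l eta t"

definition loss_var :: "nat \<Rightarrow> (nat \<Rightarrow> nat \<Rightarrow> real) \<Rightarrow> ereal \<Rightarrow> nat \<Rightarrow> real" where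
  "loss_var K l eta t =
     (\<Sum>k<K. ew_weight K l eta t k * (l t k - hedge_loss K l eta t)\<^sup>2)"

definition ah_eta :: "nat \<Rightarrow> real \<Rightarrow> ereal" where
  "ah_eta K D = (if D = 0 then \<infinity> else ereal (ln (real K) / D))"

fun ah_Delta :: "nat \<Rightarrow> (nat \<Rightarrow> nat \<Rightarrow> real) \<Rightarrow> nat \<Rightarrow> real" where
  "ah_Delta K l 0 = 0"
| "ah_Delta K l (Suc t) =
     ah_Delta K l t + mix_gap K l (ah_eta K (ah_Delta K l t)) (Suc t)"

definition ah_rate :: "nat \<Rightarrow> (nat \<Rightarrow> nat \<Rightarrow> real) \<Rightarrow> nat \<Rightarrow> ereal" where
  "ah_rate K l t = ah_eta K (ah_Delta K l (t - 1))"

definition ah_H :: "nat \<Rightarrow> (nat \<Rightarrow> nat \<Rightarrow> real) \<Rightarrow> nat \<Rightarrow> real" where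
  "ah_H K l T = (\<Sum>t\<in>{1..T}. hedge_loss K l (ah_rate K l t) t)"

definition ah_V :: "nat \<Rightarrow> (nat \<Rightarrow> nat \<Rightarrow> real) \<Rightarrow> nat \<Rightarrow> real" where
  "ah_V K l T = (\<Sum>t\<in>{1..T}. loss_var K l (ah_rate K l t) t)"

end

theory Submission imports Defs begin

text \<open>AdaHedge's mix losses telescope against the potential
  \<Phi>(\<eta>, L) = -(1/\<eta>) ln (mean_k exp (-\<eta> L_k)), which is antitone in \<eta> and lies
  between L* and L* + ln K / \<eta>. Since the learning rates \<eta>_t = ln K / \<Delta>_(t-1) decrease,
  the mix losses sum to at most L*_T + \<Delta>_T, whence H_T \<le> L*_T + 2 \<Delta>_T.
  Losses in [0,1] give v_t \<le> h_t - h_t^2, and Cauchy-Schwarz gives \<Sum> h_t^2 \<ge> H_T^2 / T,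
  so V_T \<le> H_T - H_T^2 / T; with H_T^2 \<ge> L*_T^2 this is at most
  L*_T (T - L*_T) / T + (H_T - L*_T), and the regret bound finishes the proof.\<close>

lemma mean_powr_le_powr_mean:
  fixes y :: "'a \<Rightarrow> real"
  assumes A: "finite A" "A \<noteq> {}" and y: "\<And>k. k \<in> A \<Longrightarrow> y k > 0" and p: "0 < p" "p \<le> 1"
  shows "(\<Sum>k\<in>A. y k powr p) / card A \<le> ((\<Sum>k\<in>A. y k) / card A) powr p"
proof -
  define c where "c = (\<Sum>k\<in>A. y k) / card A"
  have n: "real (card A) > 0" using A by (simp add: card_gt_0_iff)
  have c: "c > 0" unfolding c_def using A y n by (intro divide_pos_pos sum_pos) auto
  have "(\<Sum>k\<in>A. y k powr p) * c powr (1 - p) \<le> (\<Sum>k\<in>A. p * y k + (1 - p) * c)"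
    unfolding sum_distrib_right
    using Youngs_inequality_0[of p "1 - p" "y _" c] y p c by (intro sum_mono) auto
  also have "\<dots> = p * (c * card A) + (1 - p) * c * card A"
    using n by (simp add: sum.distrib sum_distrib_left[symmetric] c_def)
  also have "\<dots> = c powr p * c powr (1 - p) * card A"
    using c by (simp add: algebra_simps flip: powr_add)
  finally show ?thesis
    using n c by (simp add: c_def[symmetric] pos_divide_le_eq mult.commute mult.left_commute)
qed

declare lessThan_empty_iff [simp]

lemma cumL_0 [simp]: "cumL l 0 k = 0"
  by (simp add: cumL_def)

lemma cumL_Suc: "cumL l (Suc t) k = cumL l t k + l (Suc t) k"
  by (simp add: cumL_def)

lemma Lstar_le_cumL: "k < K \<Longrightarrow> Lstar K l t \<le> cumL l t k"
  unfolding Lstar_def by (intro Min_le) auto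

lemma ex_cumL_eq_Lstar:
  assumes "K \<ge> 1"
  obtains k where "k < K" "cumL l t k = Lstar K l t"
proof -
  have "Lstar K l t \<in> (\<lambda>k. cumL l t k) ` {..<K}"
    unfolding Lstar_def using assms by (intro Min_in) auto
  then show ?thesis using that by auto
qed

lemma Lstar_0: "K \<ge> 1 \<Longrightarrow> Lstar K l 0 = 0"
  by (simp add: Lstar_def image_constant_conv)

lemma Lstar_nonneg:
  assumes "K \<ge> 1" and "\<And>s k. s \<in> {1..t} \<Longrightarrow> k < K \<Longrightarrow> 0 \<le> l s k"
  shows "0 \<le> Lstar K l t"
proof -
  obtain k where "k < K" "cumL l t k = Lstar K l t"
    using ex_cumL_eq_Lstar[OF assms(1)] .
  then show ?thesis using assms(2) unfolding cumL_def by (metis sum_nonneg)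
qed

lemma ew_weight_nonneg: "ew_weight K l \<eta> t k \<ge> 0"
  unfolding ew_weight_def by (auto intro!: divide_nonneg_nonneg sum_nonneg)

lemma sum_ew_weight:
  assumes K: "K \<ge> 1"
  shows "(\<Sum>k<K. ew_weight K l \<eta> t k) = 1"
proof (cases "\<eta> = \<infinity>")
  case True
  define S where "S = {j\<in>{..<K}. cumL l (t - 1) j = Lstar K l (t - 1)}"
  have "card S > 0"
    using ex_cumL_eq_Lstar[OF K, of l "t - 1"] by (auto simp: S_def card_gt_0_iff)
  have "(\<Sum>k<K. ew_weight K l \<eta> t k) = (\<Sum>k\<in>S. 1 / real (card S))"
    using True unfolding S_def by (subst sum.inter_filter) (auto simp: ew_weight_def intro: sum.cong)
  then show ?thesis using \<open>card S > 0\<close> by simp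
next
  case False
  define Z where "Z = (\<Sum>j<K. exp (- real_of_ereal \<eta> * cumL l (t - 1) j))"
  have "Z > 0" unfolding Z_def using K by (intro sum_pos) auto
  have "(\<Sum>k<K. ew_weight K l \<eta> t k) = (\<Sum>k<K. exp (- real_of_ereal \<eta> * cumL l (t - 1) k) / Z)"
    using False by (intro sum.cong) (auto simp: ew_weight_def Z_def)
  then show ?thesis using \<open>Z > 0\<close> by (simp add: sum_divide_distrib[symmetric] Z_def)
qed

definition mix_potential :: "nat \<Rightarrow> (nat \<Rightarrow> real) \<Rightarrow> real \<Rightarrow> real" where
  "mix_potential K x \<eta> = - (1 / \<eta>) * ln ((\<Sum>k<K. exp (- \<eta> * x k)) / real K)"

lemma mix_potential_antimono:
  assumes K: "K \<ge> 1" and ab: "0 < a" "a \<le> b"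
  shows "mix_potential K x b \<le> mix_potential K x a"
proof -
  define Aa where "Aa = (\<Sum>k<K. exp (- a * x k)) / real K"
  define Ab where "Ab = (\<Sum>k<K. exp (- b * x k)) / real K"
  have pos: "Aa > 0" "Ab > 0"
    unfolding Aa_def Ab_def using K by (auto intro!: divide_pos_pos sum_pos)
  have "exp (- b * x k) powr (a / b) = exp (- a * x k)" for k
    using ab by (simp add: powr_def)
  then have "Aa \<le> Ab powr (a / b)"
    using mean_powr_le_powr_mean[of "{..<K}" "\<lambda>k. exp (- b * x k)" "a / b"] K ab
    by (simp add: Aa_def Ab_def)
  then have "ln Aa \<le> (a / b) * ln Ab"
    using pos by (simp flip: ln_powr)
  then have "(1 / a) * ln Aa \<le> (1 / b) * ln Ab"
    using ab by (simp add: field_simps)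
  then show ?thesis unfolding mix_potential_def Aa_def[symmetric] Ab_def[symmetric] by simp
qed

lemma mix_potential_bounds:
  assumes K: "K \<ge> 1" and \<eta>: "\<eta> > 0"
  shows "Min (x ` {..<K}) \<le> mix_potential K x \<eta>"
    and "mix_potential K x \<eta> \<le> Min (x ` {..<K}) + ln (real K) / \<eta>"
proof -
  define m where "m = Min (x ` {..<K})"
  have "m \<in> x ` {..<K}" unfolding m_def using K by (intro Min_in) auto
  then obtain j where j: "j < K" "x j = m" by auto
  have le: "m \<le> x k" if "k < K" for k unfolding m_def using that by (intro Min_le) auto
  define S where "S = (\<Sum>k<K. exp (- \<eta> * x k))"
  have S: "S > 0" unfolding S_def using K by (intro sum_pos) auto
  have "S \<le> K * exp (- \<eta> * m)"
    unfolding S_def using sum_mono[of "{..<K}" "\<lambda>k. exp (- \<eta> * x k)" "\<lambda>_. exp (- \<eta> * m)"] le \<eta>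
    by auto
  then have "ln (S / K) \<le> ln (exp (- \<eta> * m))"
    using S K by (subst ln_le_cancel_iff) (auto simp: field_simps)
  then have "\<eta> * m \<le> - ln (S / K)" by simp
  then show "Min (x ` {..<K}) \<le> mix_potential K x \<eta>"
    unfolding mix_potential_def S_def[symmetric] m_def[symmetric] using \<eta> by (simp add: field_simps)
  have "exp (- \<eta> * m) \<le> S"
    unfolding S_def using j member_le_sum[of j "{..<K}" "\<lambda>k. exp (- \<eta> * x k)"] by auto
  then have "- \<eta> * m \<le> ln S"
    using S by (simp add: ln_ge_iff)
  then have "- ln (S / K) \<le> \<eta> * m + ln K"
    using S K by (simp add: ln_div)
  then show "mix_potential K x \<eta> \<le> Min (x ` {..<K}) + ln (real K) / \<eta>"
    unfolding mix_potential_def S_def[symmetric] m_def[symmetric] using \<eta> by (simp add: field_simps)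
qed

lemma mix_loss_eq_mix_potential_diff:
  assumes K: "K \<ge> 1" and t: "t \<ge> 1"
  shows "mix_loss K l (ereal \<eta>) t = mix_potential K (cumL l t) \<eta> - mix_potential K (cumL l (t - 1)) \<eta>"
proof -
  obtain s where s: "t = Suc s" using t by (cases t) auto
  define Z where "Z = (\<Sum>j<K. exp (- \<eta> * cumL l s j))"
  define N where "N = (\<Sum>j<K. exp (- \<eta> * cumL l t j))"
  have Z: "Z > 0" unfolding Z_def using K by (intro sum_pos) auto
  have N: "N > 0" unfolding N_def using K by (intro sum_pos) auto
  have "(\<Sum>k<K. ew_weight K l (ereal \<eta>) t k * exp (- \<eta> * l t k)) = (\<Sum>k<K. exp (- \<eta> * cumL l t k) / Z)"
    by (intro sum.cong) (auto simp: ew_weight_def Z_def s cumL_Suc algebra_simps simp flip: exp_add)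
  also have "\<dots> = N / Z" by (simp add: N_def sum_divide_distrib)
  finally have "mix_loss K l (ereal \<eta>) t = - (1 / \<eta>) * ln (N / Z)"
    by (simp add: mix_loss_def)
  moreover have "ln (N / Z) = ln (N / K) - ln (Z / K)"
    using N Z K by (simp add: ln_div)
  ultimately show ?thesis
    by (simp add: mix_potential_def N_def Z_def s diff_divide_distrib)
qed

text \<open>Jensen's inequality for the convex function exp.\<close>

lemma mix_gap_nonneg_finite:
  assumes K: "K \<ge> 1" and \<eta>: "\<eta> > 0"
  shows "mix_gap K l (ereal \<eta>) t \<ge> 0"
proof -
  define w where "w k = ew_weight K l (ereal \<eta>) t k" for k
  have "exp (\<Sum>k<K. w k *\<^sub>R (- \<eta> * l t k)) \<le> (\<Sum>k<K. w k * exp (- \<eta> * l t k))"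
    using K by (intro convex_on_sum[OF _ _ exp_convex]) (auto simp: w_def ew_weight_nonneg sum_ew_weight)
  moreover have "(\<Sum>k<K. w k *\<^sub>R (- \<eta> * l t k)) = - \<eta> * hedge_loss K l (ereal \<eta>) t"
    by (simp add: hedge_loss_def w_def sum_distrib_left algebra_simps)
  ultimately have "exp (- \<eta> * hedge_loss K l (ereal \<eta>) t) \<le> (\<Sum>k<K. w k * exp (- \<eta> * l t k))"
    by simp
  then have "- \<eta> * hedge_loss K l (ereal \<eta>) t \<le> ln (\<Sum>k<K. w k * exp (- \<eta> * l t k))"
    by (metis exp_gt_zero ln_exp ln_le_cancel_iff order_less_le_trans)
  then show ?thesis
    using \<eta> by (simp add: mix_gap_def mix_loss_def w_def field_simps)
qed

lemma mix_gap_nonneg_infinite: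
  assumes K: "K \<ge> 1" and t: "t \<ge> 1"
  shows "mix_gap K l \<infinity> t \<ge> 0"
proof -
  obtain s where s: "t = Suc s" using t by (cases t) auto
  define d where "d = Lstar K l t - Lstar K l (t - 1)"
  have "ew_weight K l \<infinity> t k * d \<le> ew_weight K l \<infinity> t k * l t k" if "k < K" for k
  proof (cases "cumL l (t - 1) k = Lstar K l (t - 1)")
    case True
    then have "d \<le> l t k" using Lstar_le_cumL[OF that, of l t] by (simp add: d_def s cumL_Suc)
    then show ?thesis by (intro mult_left_mono ew_weight_nonneg)
  qed (simp add: ew_weight_def)
  then have "(\<Sum>k<K. ew_weight K l \<infinity> t k) * d \<le> hedge_loss K l \<infinity> t"
    unfolding hedge_loss_def sum_distrib_right by (intro sum_mono) auto
  then show ?thesis by (simp add: sum_ew_weight[OF K] mix_gap_def mix_loss_def d_def)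
qed

lemma mix_gap_single_expert:
  assumes t: "t \<ge> 1"
  shows "mix_gap 1 l \<infinity> t = 0"
proof -
  obtain s where s: "t = Suc s" using t by (cases t) auto
  have Lstar: "Lstar (Suc 0) l u = cumL l u 0" for u by (simp add: Lstar_def lessThan_Suc)
  have "{j. j = 0 \<and> cumL l s j = cumL l s 0} = {0}" by auto
  then have "ew_weight 1 l \<infinity> t 0 = 1" by (simp add: ew_weight_def Lstar s)
  then show ?thesis by (simp add: mix_gap_def mix_loss_def hedge_loss_def Lstar s cumL_Suc)
qed

text \<open>For K = 1 the rate ln K / D would be 0, so AdaHedge must keep D = 0 there;
  otherwise ln K / D is a genuine positive learning rate.\<close>

definition ah_admissible :: "nat \<Rightarrow> real \<Rightarrow> bool" where
  "ah_admissible K D \<longleftrightarrow> 0 \<le> D \<and> (K \<le> 1 \<longrightarrow> D = 0)"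

lemma ah_admissible_rate_pos: "ah_admissible K D \<Longrightarrow> D \<noteq> 0 \<Longrightarrow> ln (real K) / D > 0"
  unfolding ah_admissible_def by (auto intro!: divide_pos_pos)

definition ah_potential :: "nat \<Rightarrow> (nat \<Rightarrow> nat \<Rightarrow> real) \<Rightarrow> real \<Rightarrow> nat \<Rightarrow> real" where
  "ah_potential K l D t =
     (if D = 0 then Lstar K l t else mix_potential K (cumL l t) (ln (real K) / D))"

lemma mix_loss_ah_eta:
  assumes K: "K \<ge> 1" and t: "t \<ge> 1"
  shows "mix_loss K l (ah_eta K D) t = ah_potential K l D t - ah_potential K l D (t - 1)"
proof (cases "D = 0")
  case True
  then show ?thesis by (simp add: ah_eta_def ah_potential_def mix_loss_def)
next
  case False
  then show ?thesis
    using mix_loss_eq_mix_potential_diff[OF K t] by (simp add: ah_eta_def ah_potential_def)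
qed

lemma mix_gap_ah_eta_nonneg:
  assumes K: "K \<ge> 1" and D: "ah_admissible K D" and t: "t \<ge> 1"
  shows "mix_gap K l (ah_eta K D) t \<ge> 0"
  using mix_gap_nonneg_infinite[OF K t] mix_gap_nonneg_finite[OF K ah_admissible_rate_pos[OF D]]
  by (simp add: ah_eta_def)

lemma ah_potential_mono:
  assumes K: "K \<ge> 1" and D: "ah_admissible K D" "ah_admissible K D'" "D \<le> D'"
  shows "ah_potential K l D t \<le> ah_potential K l D' t"
proof (cases "D = 0")
  case True
  then show ?thesis
    using mix_potential_bounds(1)[OF K ah_admissible_rate_pos[OF D(2)], of "cumL l t"]
    by (simp add: ah_potential_def Lstar_def)
next
  case False
  then have "D' \<noteq> 0" "D > 0" using D unfolding ah_admissible_def by auto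
  moreover have "ln (real K) / D' \<le> ln (real K) / D"
    using D False \<open>D > 0\<close> unfolding ah_admissible_def by (intro divide_left_mono) auto
  ultimately show ?thesis
    using False mix_potential_antimono[OF K ah_admissible_rate_pos[OF D(2)]]
    by (simp add: ah_potential_def)
qed

lemma ah_potential_le:
  assumes K: "K \<ge> 1" and D: "ah_admissible K D"
  shows "ah_potential K l D t \<le> Lstar K l t + D"
proof (cases "D = 0")
  case False
  then have "ln (real K) / (ln (real K) / D) = D"
    using ah_admissible_rate_pos[OF D] by auto
  then show ?thesis
    using False mix_potential_bounds(2)[OF K ah_admissible_rate_pos[OF D False], of "cumL l t"]
    by (simp add: ah_potential_def Lstar_def)
qed (simp add: ah_potential_def)

lemma ah_potential_0: "K \<ge> 1 \<Longrightarrow> ah_potential K l D 0 = 0"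
  by (simp add: ah_potential_def Lstar_0 mix_potential_def)

lemma ah_Delta_admissible:
  assumes K: "K \<ge> 1"
  shows "ah_admissible K (ah_Delta K l t)"
proof (induction t)
  case 0
  then show ?case by (simp add: ah_admissible_def)
next
  case (Suc t)
  show ?case
  proof (cases "K \<le> 1")
    case True
    then have "K = 1" "ah_Delta K l t = 0" using K Suc by (auto simp: ah_admissible_def)
    then show ?thesis
      using mix_gap_single_expert[of "Suc t" l] by (simp add: ah_admissible_def ah_eta_def)
  next
    case False
    then show ?thesis
      using Suc mix_gap_ah_eta_nonneg[OF K Suc, of "Suc t" l] by (simp add: ah_admissible_def)
  qed
qed

lemma ah_Delta_mono: "K \<ge> 1 \<Longrightarrow> ah_Delta K l t \<le> ah_Delta K l (Suc t)"
  by (simp add: mix_gap_ah_eta_nonneg ah_Delta_admissible)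

lemma ah_Delta_eq_sum: "ah_Delta K l T = (\<Sum>t\<in>{1..T}. mix_gap K l (ah_rate K l t) t)"
  by (induction T) (simp_all add: ah_rate_def)

lemma sum_ah_mix_loss_le:
  assumes K: "K \<ge> 1"
  shows "(\<Sum>t\<in>{1..T}. mix_loss K l (ah_rate K l t) t) \<le> ah_potential K l (ah_Delta K l T) T"
proof (induction T)
  case 0
  then show ?case by (simp add: ah_potential_0[OF K])
next
  case (Suc T)
  have "(\<Sum>t\<in>{1..Suc T}. mix_loss K l (ah_rate K l t) t)
      = (\<Sum>t\<in>{1..T}. mix_loss K l (ah_rate K l t) t)
        + (ah_potential K l (ah_Delta K l T) (Suc T) - ah_potential K l (ah_Delta K l T) T)"
    using mix_loss_ah_eta[OF K, of "Suc T" l] by (simp add: ah_rate_def)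
  also have "\<dots> \<le> ah_potential K l (ah_Delta K l T) (Suc T)"
    using Suc by simp
  also have "\<dots> \<le> ah_potential K l (ah_Delta K l (Suc T)) (Suc T)"
    using K by (intro ah_potential_mono ah_Delta_admissible ah_Delta_mono)
  finally show ?case .
qed

lemma ah_H_le_Lstar_plus_2Delta:
  assumes K: "K \<ge> 1"
  shows "ah_H K l T \<le> Lstar K l T + 2 * ah_Delta K l T"
proof -
  have "ah_H K l T = (\<Sum>t\<in>{1..T}. mix_loss K l (ah_rate K l t) t) + ah_Delta K l T"
    unfolding ah_H_def ah_Delta_eq_sum by (simp add: mix_gap_def sum.distrib[symmetric])
  also have "\<dots> \<le> ah_potential K l (ah_Delta K l T) T + ah_Delta K l T"
    using sum_ah_mix_loss_le[OF K] by simp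
  also have "\<dots> \<le> Lstar K l T + 2 * ah_Delta K l T"
    using ah_potential_le[OF K ah_Delta_admissible[OF K], of l l T T] by simp
  finally show ?thesis .
qed

lemma loss_var_le:
  assumes K: "K \<ge> 1" and l: "\<And>k. k < K \<Longrightarrow> 0 \<le> l t k \<and> l t k \<le> 1"
  shows "loss_var K l \<eta> t \<le> hedge_loss K l \<eta> t - (hedge_loss K l \<eta> t)\<^sup>2"
proof -
  define w where "w k = ew_weight K l \<eta> t k" for k
  define h where "h = hedge_loss K l \<eta> t"
  have h: "h = (\<Sum>k<K. w k * l t k)" by (simp add: h_def w_def hedge_loss_def)
  have w: "(\<Sum>k<K. w k) = 1" using sum_ew_weight[OF K] by (simp add: w_def)
  have "loss_var K l \<eta> t = (\<Sum>k<K. w k * (l t k)\<^sup>2 - 2 * h * (w k * l t k) + h\<^sup>2 * w k)"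
    unfolding loss_var_def w_def[symmetric] h_def[symmetric]
    by (intro sum.cong) (auto simp: power2_eq_square algebra_simps)
  also have "\<dots> = (\<Sum>k<K. w k * (l t k)\<^sup>2) - h\<^sup>2"
    by (simp add: sum.distrib sum_subtractf sum_distrib_left[symmetric] h[symmetric] w power2_eq_square)
  also have "(\<Sum>k<K. w k * (l t k)\<^sup>2) \<le> h"
    unfolding h using l by (intro sum_mono mult_left_mono) (auto simp: w_def ew_weight_nonneg power2_eq_square mult_left_le)
  finally show ?thesis by (simp add: h_def)
qed

lemma ah_V_le:
  assumes K: "K \<ge> 1" and T: "T \<ge> 1"
    and l: "\<And>t k. t \<in> {1..T} \<Longrightarrow> k < K \<Longrightarrow> 0 \<le> l t k \<and> l t k \<le> 1"
  shows "ah_V K l T \<le> ah_H K l T - (ah_H K l T)\<^sup>2 / real T"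
proof -
  define h where "h t = hedge_loss K l (ah_rate K l t) t" for t
  have H: "ah_H K l T = (\<Sum>t\<in>{1..T}. h t * 1)" by (simp add: ah_H_def h_def)
  have "(ah_H K l T)\<^sup>2 \<le> (\<Sum>t\<in>{1..T}. (h t)\<^sup>2) * real T"
    unfolding H using Cauchy_Schwarz_ineq_sum[of h "\<lambda>_. 1" "{1..T}"] by simp
  then have "(ah_H K l T)\<^sup>2 / real T \<le> (\<Sum>t\<in>{1..T}. (h t)\<^sup>2)"
    using T by (simp add: divide_le_eq)
  moreover have "ah_V K l T \<le> (\<Sum>t\<in>{1..T}. h t - (h t)\<^sup>2)"
    unfolding ah_V_def h_def using l by (intro sum_mono loss_var_le[OF K]) auto
  ultimately show ?thesis by (simp add: H sum_subtractf)
qed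

lemma diff_square_div_le:
  fixes L H T :: real
  assumes "0 \<le> L" "L \<le> H" "T > 0"
  shows "H - H\<^sup>2 / T \<le> L * (T - L) / T + (H - L)"
proof -
  have "L\<^sup>2 \<le> H\<^sup>2" using assms by (intro power_mono) auto
  then show ?thesis using assms by (simp add: field_simps power2_eq_square)
qed

theorem lemma7:
  fixes K T :: nat and l :: "nat \<Rightarrow> nat \<Rightarrow> real"
  assumes "K \<ge> 1" and "T \<ge> 1"
    and "\<And>t k. t \<in> {1..T} \<Longrightarrow> k < K \<Longrightarrow> 0 \<le> l t k \<and> l t k \<le> 1"
    and "ah_H K l T \<ge> Lstar K l T"
  shows "ah_V K l T \<le> Lstar K l T * (real T - Lstar K l T) / real T + 2 * ah_Delta K l T"
proof -
  have "0 \<le> Lstar K l T" using Lstar_nonneg[OF assms(1)] assms(3) by blast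
  then have "ah_H K l T - (ah_H K l T)\<^sup>2 / real T
      \<le> Lstar K l T * (real T - Lstar K l T) / real T + (ah_H K l T - Lstar K l T)"
    using assms(2,4) by (intro diff_square_div_le) auto
  then show ?thesis
    using ah_V_le[of K T l, OF assms(1-3)] ah_H_le_Lstar_plus_2Delta[OF assms(1), of l T] by linarith
qed

end
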